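(* Let $\mathbb{F}_2=\langle a\rangle\ast\langle b\rangle$, let $f_A:\langle a\rangle\to\mathbb{R}$ be a bounded, alternating, periodic function, and let $f=f_A\ast 0$. Then the stabilizers $\mathrm{Stab}_{\mathrm{Aut}(\mathbb{F}_2)}(f)$, $\mathrm{Stab}_{\mathrm{Out}(\mathbb{F}_2)}(\widehat f)$ and $\mathrm{Stab}_{\mathrm{Out}(\mathbb{F}_2)}(\omega_f)$ are infinite.
   Context: Alternating means $f_A(x^{-1})=-f_A(x)$; periodic means $f_A(a^{k+n})=f_A(a^k)$ for some $n\neq0$ and all $k$. Each non-trivial element of $\mathbb{F}_2$ has a unique normal form $a^{k_1}b^{l_1}\cdots a^{k_m}b^{l_m}$ with all exponents non-zero except possibly $k_1$ or $l_m$, and $f(1)=0$, $f(a^{k_1}b^{l_1}\cdots a^{k_m}b^{l_m})=f_A(a^{k_1})+\dots+f_A(a^{k_m})$. Automorphisms act on functions by $\tau.f=f\circ\tau^{-1}$; $\widehat f(g)=\lim_{k\to\infty}f(g^k)/k$ is the homogenization (conjugation invariant, so the action on homogeneous quasimorphisms factors through $\mathrm{Out}(\mathbb{F}_2)$); $\omega_f\in\mathrm{H}^2_\mathrm{b}(\mathbb{F}_2,\mathbb{R})$ is the bounded class of $\partial f(g,h)=f(g)+f(h)-f(gh)$ with the natural action $\tau.\omega_f=\omega_{\tau.f}$ of $\mathrm{Out}(\mathbb{F}_2)$. *)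

theory Defs
  imports "HOL-Algebra.Group" "HOL-Analysis.Analysis"
begin

text \<open>A syllable (True, k) stands for a^k, (False, l) for b^l. A normal form is a
list of syllables with non-zero exponents and alternating generators.\<close>

type_synonym f2word = "(bool \<times> int) list"

fun alt_gens :: "f2word \<Rightarrow> bool" where
  "alt_gens [] = True"
| "alt_gens [_] = True"
| "alt_gens ((g, _) # (h, e) # w) = (g \<noteq> h \<and> alt_gens ((h, e) # w))"

definition reduced :: "f2word \<Rightarrow> bool" where
  "reduced w \<longleftrightarrow> (\<forall>s \<in> set w. snd s \<noteq> 0) \<and> alt_gens w"

fun scons :: "bool \<times> int \<Rightarrow> f2word \<Rightarrow> f2word" where
  "scons (g, e) [] = (if e = 0 then [] else [(g, e)])"
| "scons (g, e) ((h, d) # w) =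
     (if e = 0 then (h, d) # w
      else if g = h then (if e + d = 0 then w else (g, e + d) # w)
      else (g, e) # (h, d) # w)"

definition f2_mult :: "f2word \<Rightarrow> f2word \<Rightarrow> f2word" where
  "f2_mult x y = foldr scons x y"

definition F2 :: "f2word monoid" where
  "F2 = \<lparr>carrier = {w. reduced w}, monoid.mult = f2_mult, one = []\<rparr>"

definition Aut :: "(f2word \<Rightarrow> f2word) set" where
  "Aut = {\<tau>. \<tau> \<in> iso F2 F2 \<and> \<tau> \<in> extensional (carrier F2)}"

definition act :: "(f2word \<Rightarrow> f2word) \<Rightarrow> (f2word \<Rightarrow> real) \<Rightarrow> f2word \<Rightarrow> real" where
  "act \<tau> f = (\<lambda>x. f (inv_into (carrier F2) \<tau> x))"

text \<open>The class of tau in Out(F2) = Aut(F2)/Inn(F2).\<close>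
definition out_class :: "(f2word \<Rightarrow> f2word) \<Rightarrow> (f2word \<Rightarrow> f2word) set" where
  "out_class \<tau> = {\<sigma> \<in> Aut. \<exists>g \<in> carrier F2. \<forall>x \<in> carrier F2.
      \<sigma> x = g \<otimes>\<^bsub>F2\<^esub> \<tau> x \<otimes>\<^bsub>F2\<^esub> inv\<^bsub>F2\<^esub> g}"

text \<open>A function f_A on <a> is represented by k \<mapsto> f_A(a^k).\<close>
definition alternating :: "(int \<Rightarrow> real) \<Rightarrow> bool" where
  "alternating fA \<longleftrightarrow> (\<forall>k. fA (- k) = - fA k)"

definition periodic :: "(int \<Rightarrow> real) \<Rightarrow> bool" where
  "periodic fA \<longleftrightarrow> (\<exists>n. n \<noteq> 0 \<and> (\<forall>k. fA (k + n) = fA k))"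

definition bounded_fun :: "(int \<Rightarrow> real) \<Rightarrow> bool" where
  "bounded_fun fA \<longleftrightarrow> (\<exists>C. \<forall>k. \<bar>fA k\<bar> \<le> C)"

definition free_prod_zero :: "(int \<Rightarrow> real) \<Rightarrow> f2word \<Rightarrow> real" where
  "free_prod_zero fA w = (\<Sum>s\<leftarrow>w. if fst s then fA (snd s) else 0)"

definition homog :: "(f2word \<Rightarrow> real) \<Rightarrow> f2word \<Rightarrow> real" where
  "homog f g = lim (\<lambda>k::nat. f (g [^]\<^bsub>F2\<^esub> k) / real k)"

definition cobdry :: "(f2word \<Rightarrow> real) \<Rightarrow> f2word \<Rightarrow> f2word \<Rightarrow> real" where
  "cobdry f g h = f g + f h - f (g \<otimes>\<^bsub>F2\<^esub> h)"

text \<open>omega_f = omega_g in H^2_b(F2,R): the cocycles differ by the coboundary of a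
bounded 1-cochain.\<close>
definition same_bclass :: "(f2word \<Rightarrow> real) \<Rightarrow> (f2word \<Rightarrow> real) \<Rightarrow> bool" where
  "same_bclass f g \<longleftrightarrow> (\<exists>u. (\<exists>C. \<forall>x \<in> carrier F2. \<bar>u x\<bar> \<le> C) \<and>
      (\<forall>x \<in> carrier F2. \<forall>y \<in> carrier F2. cobdry f x y - cobdry g x y = cobdry u x y))"

definition Stab_Aut :: "(f2word \<Rightarrow> real) \<Rightarrow> (f2word \<Rightarrow> f2word) set" where
  "Stab_Aut f = {\<tau> \<in> Aut. \<forall>x \<in> carrier F2. act \<tau> f x = f x}"

text \<open>Stabilizer in Out(F2) of a homogeneous (conjugation-invariant) function:
the classes of automorphisms fixing it.\<close>
definition Stab_Out_fun :: "(f2word \<Rightarrow> real) \<Rightarrow> (f2word \<Rightarrow> f2word) set set" where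
  "Stab_Out_fun \<phi> = out_class ` Stab_Aut \<phi>"

definition Stab_Out_bclass :: "(f2word \<Rightarrow> real) \<Rightarrow> (f2word \<Rightarrow> f2word) set set" where
  "Stab_Out_bclass f = out_class ` {\<tau> \<in> Aut. same_bclass (act \<tau> f) f}"

end

theory Submission
  imports Defs
begin

text \<open>For a period \<open>q\<close> of \<open>f\<^sub>A\<close>, the transvection \<open>a \<mapsto> a, b \<mapsto> b a\<^sup>q\<close>
  fixes \<open>f = f\<^sub>A * 0\<close>: in the normal form of the image of a word, each new syllable
  \<open>a\<^sup>\<plusminus>\<^sup>q\<close> either stands alone, contributing \<open>f\<^sub>A(\<plusminus>q) = f\<^sub>A(0) = 0\<close>,
  or merges with an \<open>a\<close>-syllable \<open>a\<^sup>k\<close> of the word, turning \<open>f\<^sub>A(k)\<close> into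
  \<open>f\<^sub>A(k \<plusminus> q) = f\<^sub>A(k)\<close>. Automorphisms fixing \<open>f\<close> also fix its homogenization and
  its bounded class. Transvections for distinct \<open>q\<close> have distinct outer classes, since the
  \<open>a\<close>-exponent sum \<open>q\<close> of the image of \<open>b\<close> is invariant under conjugation; so the
  multiples of the period give infinitely many elements of each stabilizer.\<close>

section \<open>The group structure on normal forms\<close>

lemma reduced_Nil [simp]: "reduced []"
  by (simp add: reduced_def)

lemma reduced_Cons:
  "reduced (s # w) \<longleftrightarrow> snd s \<noteq> 0 \<and> reduced w \<and> (w = [] \<or> fst (hd w) \<noteq> fst s)"
  unfolding reduced_def
  by (cases s; cases w) (auto simp del: alt_gens.simps(3) simp add: alt_gens.simps)

lemma alt_gens_snoc: "alt_gens (w @ [s]) \<longleftrightarrow> alt_gens w \<and> (w = [] \<or> fst (last w) \<noteq> fst s)"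
proof (induction w)
  case (Cons t w)
  then show ?case
    by (cases t; cases s; cases w) (auto simp del: alt_gens.simps(3) simp add: alt_gens.simps)
qed simp

lemma reduced_snoc:
  "reduced (w @ [s]) \<longleftrightarrow> reduced w \<and> snd s \<noteq> 0 \<and> (w = [] \<or> fst (last w) \<noteq> fst s)"
  unfolding reduced_def using alt_gens_snoc by auto

lemma scons_zero [simp]: "scons (g, 0) w = w"
  by (cases w) auto

lemma scons_reduced_Cons: "reduced (s # w) \<Longrightarrow> scons s w = s # w"
  by (cases s; cases w) (auto simp: reduced_Cons)

lemma reduced_scons: "reduced w \<Longrightarrow> reduced (scons s w)"
  by (cases s; cases w) (auto simp: reduced_Cons split: if_splits)

lemma scons_scons_same: "reduced w \<Longrightarrow> scons (g, e) (scons (g, d) w) = scons (g, e + d) w"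
proof (cases w)
  case (Cons s w')
  assume "reduced w"
  then show ?thesis
    using Cons by (cases s; cases w') (auto simp: reduced_Cons)
qed simp

lemma f2_mult_Nil [simp]: "f2_mult [] y = y"
  by (simp add: f2_mult_def)

lemma f2_mult_Cons [simp]: "f2_mult (s # x) y = scons s (f2_mult x y)"
  by (simp add: f2_mult_def)

lemma reduced_f2_mult: "reduced y \<Longrightarrow> reduced (f2_mult x y)"
  by (induction x) (simp_all add: reduced_scons)

lemma f2_mult_Nil_right: "reduced x \<Longrightarrow> f2_mult x [] = x"
  by (induction x) (simp_all add: reduced_Cons scons_reduced_Cons)

lemma f2_mult_scons: "reduced z \<Longrightarrow> f2_mult (scons s v) z = scons s (f2_mult v z)"
proof (cases v)
  case (Cons t v')
  assume "reduced z"
  then have "reduced (f2_mult v' z)" by (rule reduced_f2_mult)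
  then show ?thesis
    using Cons scons_scons_same by (cases s; cases t) auto
qed (cases s, simp)

lemma f2_mult_assoc:
  "reduced y \<Longrightarrow> reduced z \<Longrightarrow> f2_mult (f2_mult x y) z = f2_mult x (f2_mult y z)"
  by (induction x) (simp_all add: f2_mult_scons reduced_f2_mult)

definition f2_inverse :: "f2word \<Rightarrow> f2word" where
  "f2_inverse x = rev (map (\<lambda>(g, e). (g, - e)) x)"

lemma f2_inverse_Cons: "f2_inverse ((g, e) # x) = f2_inverse x @ [(g, - e)]"
  by (simp add: f2_inverse_def)

lemma reduced_f2_inverse: "reduced x \<Longrightarrow> reduced (f2_inverse x)"
proof (induction x)
  case (Cons s x)
  obtain g e where s: "s = (g, e)" by fastforce
  have "x \<noteq> [] \<Longrightarrow> fst (last (f2_inverse x)) \<noteq> g"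
    using Cons.prems s by (cases x) (auto simp: reduced_Cons f2_inverse_def split: prod.splits)
  then show ?case
    using Cons s by (auto simp: f2_inverse_Cons reduced_snoc reduced_Cons f2_inverse_def)
qed (simp add: f2_inverse_def)

lemma f2_mult_inverse_left: "reduced x \<Longrightarrow> f2_mult (f2_inverse x) x = []"
proof (induction x)
  case (Cons s x)
  then show ?case
    by (cases s) (auto simp: f2_inverse_Cons f2_mult_def reduced_Cons)
qed (simp add: f2_inverse_def)

lemma carrier_F2: "carrier F2 = {w. reduced w}"
  and mult_F2: "x \<otimes>\<^bsub>F2\<^esub> y = f2_mult x y"
  and one_F2: "\<one>\<^bsub>F2\<^esub> = []"
  by (simp_all add: F2_def)

lemma group_F2: "group F2"
proof (rule groupI)
  fix x assume "x \<in> carrier F2"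
  then show "\<exists>y\<in>carrier F2. y \<otimes>\<^bsub>F2\<^esub> x = \<one>\<^bsub>F2\<^esub>"
    by (intro bexI[of _ "f2_inverse x"])
       (simp_all add: carrier_F2 mult_F2 one_F2 f2_mult_inverse_left reduced_f2_inverse)
qed (simp_all add: carrier_F2 mult_F2 one_F2 reduced_f2_mult f2_mult_assoc)

section \<open>Homomorphisms defined on syllables\<close>

definition extend_syllables :: "(bool \<times> int \<Rightarrow> f2word) \<Rightarrow> f2word \<Rightarrow> f2word" where
  "extend_syllables \<phi> w = foldr (\<lambda>s. f2_mult (\<phi> s)) w []"

lemma extend_syllables_Nil [simp]: "extend_syllables \<phi> [] = []"
  and extend_syllables_Cons [simp]:
    "extend_syllables \<phi> (s # w) = f2_mult (\<phi> s) (extend_syllables \<phi> w)"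
  by (simp_all add: extend_syllables_def)

locale syllable_hom =
  fixes \<phi> :: "bool \<times> int \<Rightarrow> f2word"
  assumes reduced_image: "reduced (\<phi> s)"
    and image_zero: "\<phi> (g, 0) = []"
    and image_add: "\<phi> (g, e + d) = f2_mult (\<phi> (g, e)) (\<phi> (g, d))"
begin

lemma reduced_extend: "reduced (extend_syllables \<phi> w)"
  by (induction w) (simp_all add: reduced_f2_mult)

lemma extend_scons:
  assumes "reduced w"
  shows "extend_syllables \<phi> (scons s w) = f2_mult (\<phi> s) (extend_syllables \<phi> w)"
proof -
  obtain g e where s: "s = (g, e)" by fastforce
  show ?thesis
  proof (cases w)
    case Nil
    then show ?thesis using s image_zero by (simp add: f2_mult_Nil_right reduced_image)
  next
    case (Cons t w')
    obtain h d where t: "t = (h, d)" by fastforce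
    have "f2_mult (\<phi> (g, e)) (f2_mult (\<phi> (g, d)) (extend_syllables \<phi> w'))
        = f2_mult (\<phi> (g, e + d)) (extend_syllables \<phi> w')"
      using f2_mult_assoc[OF reduced_image reduced_extend] image_add by simp
    then show ?thesis using Cons s t image_zero by auto
  qed
qed

lemma extend_mult:
  "reduced y \<Longrightarrow> extend_syllables \<phi> (f2_mult x y) = f2_mult (extend_syllables \<phi> x) (extend_syllables \<phi> y)"
  by (induction x)
     (simp_all add: extend_scons reduced_f2_mult f2_mult_assoc reduced_image reduced_extend)

end

section \<open>The transvections \<open>a \<mapsto> a, b \<mapsto> b a\<^sup>q\<close>\<close>

text \<open>\<open>ba_pow q l\<close> is the normal form of \<open>(b a\<^sup>q)\<^sup>l\<close> for \<open>q \<noteq> 0\<close>.\<close>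

definition ba_pow :: "int \<Rightarrow> int \<Rightarrow> f2word" where
  "ba_pow q l = (if 0 \<le> l then concat (replicate (nat l) [(False, 1), (True, q)])
                 else concat (replicate (nat (- l)) [(True, - q), (False, - 1)]))"

lemma ba_pow_0 [simp]: "ba_pow q 0 = []"
  by (simp add: ba_pow_def)

lemma ba_pow_pos:
  assumes "0 < l"
  shows "ba_pow q l = (False, 1) # (True, q) # ba_pow q (l - 1)"
proof -
  have "nat l = Suc (nat (l - 1))" using assms by simp
  then show ?thesis using assms by (simp add: ba_pow_def)
qed

lemma ba_pow_neg:
  assumes "l < 0"
  shows "ba_pow q l = (True, - q) # (False, - 1) # ba_pow q (l + 1)"
proof -
  have "nat (- l) = Suc (nat (- (l + 1)))" using assms by simp
  then show ?thesis using assms by (simp add: ba_pow_def)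
qed

lemma reduced_ba_pow: "q \<noteq> 0 \<Longrightarrow> reduced (ba_pow q l)"
proof (induction l rule: int_induct[where k = 0])
  case (step1 i)
  then show ?case
    using ba_pow_pos[of "i + 1" q] by (cases "i = 0") (auto simp: reduced_Cons ba_pow_pos)
next
  case (step2 i)
  then show ?case
    using ba_pow_neg[of "i - 1" q] by (cases "i = 0") (auto simp: reduced_Cons ba_pow_neg)
qed simp

lemma ba_pow_succ:
  assumes q: "q \<noteq> 0"
  shows "ba_pow q (l + 1) = scons (False, 1) (scons (True, q) (ba_pow q l))"
proof (cases "0 \<le> l")
  case True
  have "scons (True, q) (ba_pow q l) = (True, q) # ba_pow q l"
    using q True ba_pow_pos[of l q] by (cases "l = 0") simp_all
  then show ?thesis using True ba_pow_pos[of "l + 1" q] by simp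
next
  case False
  then show ?thesis using q ba_pow_neg[of l q] by simp
qed

lemma ba_pow_pred:
  assumes q: "q \<noteq> 0"
  shows "ba_pow q (l - 1) = scons (True, - q) (scons (False, - 1) (ba_pow q l))"
proof (cases "l \<le> 0")
  case True
  have "scons (False, - 1) (ba_pow q l) = (False, - 1) # ba_pow q l"
    using True ba_pow_neg[of l q] by (cases "l = 0") simp_all
  then show ?thesis using q True ba_pow_neg[of "l - 1" q] by simp
next
  case False
  then show ?thesis using q ba_pow_pos[of l q] by simp
qed

lemma ba_pow_add:
  assumes q: "q \<noteq> 0"
  shows "ba_pow q (e + d) = f2_mult (ba_pow q e) (ba_pow q d)"
proof (induction e rule: int_induct[where k = 0])
  case (step1 i)
  have "ba_pow q (i + 1 + d) = scons (False, 1) (scons (True, q) (ba_pow q (i + d)))"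
    using ba_pow_succ[OF q, of "i + d"] by (simp add: algebra_simps)
  then show ?case
    using step1 q by (simp add: ba_pow_succ f2_mult_scons reduced_ba_pow reduced_scons)
next
  case (step2 i)
  have "ba_pow q (i - 1 + d) = scons (True, - q) (scons (False, - 1) (ba_pow q (i + d)))"
    using ba_pow_pred[OF q, of "i + d"] by (simp add: algebra_simps)
  then show ?case
    using step2 q by (simp add: ba_pow_pred f2_mult_scons reduced_ba_pow reduced_scons)
qed simp

definition transvection_syllable :: "int \<Rightarrow> bool \<times> int \<Rightarrow> f2word" where
  "transvection_syllable q s = (if fst s then scons s [] else ba_pow q (snd s))"

lemma transvection_syllable_a [simp]: "transvection_syllable q (True, e) = scons (True, e) []"
  and transvection_syllable_b [simp]: "transvection_syllable q (False, l) = ba_pow q l"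
  by (simp_all add: transvection_syllable_def)

definition transvection :: "int \<Rightarrow> f2word \<Rightarrow> f2word" where
  "transvection q = restrict (extend_syllables (transvection_syllable q)) (carrier F2)"

lemma syllable_hom_transvection: "q \<noteq> 0 \<Longrightarrow> syllable_hom (transvection_syllable q)"
  by unfold_locales
     (auto simp: transvection_syllable_def reduced_ba_pow ba_pow_add reduced_Cons)

lemma extend_transvection_ba_pow:
  assumes q: "q \<noteq> 0"
  shows "extend_syllables (transvection_syllable (- q)) (ba_pow q l) = scons (False, l) []"
proof -
  interpret syllable_hom "transvection_syllable (- q)"
    using q by (simp add: syllable_hom_transvection)
  show ?thesis
  proof (induction l rule: int_induct[where k = 0])
    case (step1 i)
    then show ?case
      using q ba_pow_pos[of 1 "- q"]
      by (simp add: ba_pow_succ extend_scons reduced_scons reduced_ba_pow scons_scons_same)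
  next
    case (step2 i)
    then show ?case
      using q ba_pow_neg[of "- 1" "- q"]
      by (simp add: ba_pow_pred extend_scons reduced_scons reduced_ba_pow scons_scons_same)
  qed simp
qed

lemma extend_transvection_inverse:
  assumes q: "q \<noteq> 0" and x: "reduced x"
  shows "extend_syllables (transvection_syllable (- q)) (extend_syllables (transvection_syllable q) x) = x"
  using x
proof (induction x)
  case (Cons s x)
  interpret inverse: syllable_hom "transvection_syllable (- q)"
    using q by (simp add: syllable_hom_transvection)
  interpret syllable_hom "transvection_syllable q"
    using q by (simp add: syllable_hom_transvection)
  have "extend_syllables (transvection_syllable (- q)) (transvection_syllable q s) = scons s []"
    using extend_transvection_ba_pow[OF q] by (cases s; cases "fst s") simp_all
  then show ?case
    using Cons by (cases s) (simp add: inverse.extend_mult reduced_extend reduced_Cons scons_reduced_Cons)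
qed simp

lemma transvection_closed: "q \<noteq> 0 \<Longrightarrow> x \<in> carrier F2 \<Longrightarrow> transvection q x \<in> carrier F2"
  using syllable_hom.reduced_extend[OF syllable_hom_transvection]
  by (simp add: transvection_def carrier_F2)

lemma transvection_inverse:
  "q \<noteq> 0 \<Longrightarrow> x \<in> carrier F2 \<Longrightarrow> transvection (- q) (transvection q x) = x"
  using transvection_closed[of q x] by (simp add: transvection_def carrier_F2 extend_transvection_inverse)

lemma transvection_hom: "q \<noteq> 0 \<Longrightarrow> transvection q \<in> hom F2 F2"
  using syllable_hom.extend_mult[OF syllable_hom_transvection]
    syllable_hom.reduced_extend[OF syllable_hom_transvection]
  by (intro homI) (simp_all add: transvection_closed transvection_def carrier_F2 mult_F2 reduced_f2_mult)

lemma transvection_Aut: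
  assumes q: "q \<noteq> 0"
  shows "transvection q \<in> Aut"
proof -
  have "bij_betw (transvection q) (carrier F2) (carrier F2)"
    using q transvection_inverse[of "- q"]
    by (intro bij_betwI[where g = "transvection (- q)"]) (simp_all add: transvection_closed transvection_inverse)
  then show ?thesis
    using transvection_hom[OF q] by (simp add: Aut_def iso_def transvection_def)
qed

lemma inv_into_transvection:
  assumes q: "q \<noteq> 0" and x: "x \<in> carrier F2"
  shows "inv_into (carrier F2) (transvection q) x = transvection (- q) x"
proof (rule inv_into_f_eq)
  show "inj_on (transvection q) (carrier F2)"
    using q by (metis inj_onI transvection_inverse)
  show "transvection (- q) x \<in> carrier F2" "transvection q (transvection (- q) x) = x"
    using q x transvection_closed transvection_inverse[of "- q"] by simp_all
qed

section \<open>Transvections by a period of \<open>f\<^sub>A\<close> fix \<open>f\<^sub>A * 0\<close>\<close>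

definition lead_a_exp :: "f2word \<Rightarrow> int" where
  "lead_a_exp w = (case w of [] \<Rightarrow> 0 | s # _ \<Rightarrow> (if fst s then snd s else 0))"

definition first_b_sign :: "f2word \<Rightarrow> int" where
  "first_b_sign w = (case dropWhile fst w of [] \<Rightarrow> 0 | s # _ \<Rightarrow> sgn (snd s))"

lemma lead_a_exp_simps [simp]:
  "lead_a_exp [] = 0" "lead_a_exp ((True, k) # w) = k" "lead_a_exp ((False, l) # w) = 0"
  by (simp_all add: lead_a_exp_def)

lemma first_b_sign_simps [simp]:
  "first_b_sign [] = 0" "first_b_sign ((True, k) # w) = first_b_sign w"
  "first_b_sign ((False, l) # w) = sgn l"
  by (simp_all add: first_b_sign_def)

lemma free_prod_zero_Nil [simp]: "free_prod_zero fA [] = 0"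
  and free_prod_zero_Cons [simp]:
    "free_prod_zero fA (s # w) = (if fst s then fA (snd s) else 0) + free_prod_zero fA w"
  by (simp_all add: free_prod_zero_def)

lemma free_prod_zero_scons_a:
  "fA 0 = 0 \<Longrightarrow> free_prod_zero fA (scons (True, k) y)
    = free_prod_zero fA y - fA (lead_a_exp y) + fA (k + lead_a_exp y)"
  by (cases y) (auto simp: lead_a_exp_def)

lemma lead_a_exp_scons_a: "reduced y \<Longrightarrow> lead_a_exp (scons (True, k) y) = k + lead_a_exp y"
  by (cases y rule: remdups_adj.cases) (auto simp: lead_a_exp_def reduced_Cons)

lemma first_b_sign_scons_a: "first_b_sign (scons (True, k) y) = first_b_sign y"
  by (cases y) (auto simp: first_b_sign_def)

lemma lead_a_exp_eq_0_iff:
  "reduced x \<Longrightarrow> x = [] \<or> fst (hd x) \<Longrightarrow> lead_a_exp x = 0 \<longleftrightarrow> x = []"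
  by (cases x) (auto simp: reduced_Cons lead_a_exp_def)

context
  fixes fA :: "int \<Rightarrow> real" and q :: int
  assumes fA_zero: "fA 0 = 0" and fA_period: "\<And>k. fA (k + q) = fA k" and q: "q \<noteq> 0"
begin

lemma fA_period_simps [simp]:
  "fA (q + k) = fA k" "fA (k - q) = fA k" "fA (- q + k) = fA k" "fA q = 0" "fA (- q) = 0"
  using fA_period[of k] fA_period[of "k - q"] fA_period[of 0] fA_period[of "- q"] fA_zero
  by (simp_all add: add.commute)

lemma f2_mult_ba_pow_pos:
  assumes "0 < l" "reduced y" "lead_a_exp y = - q \<Longrightarrow> 0 \<le> first_b_sign y"
  shows "free_prod_zero fA (f2_mult (ba_pow q l) y) = free_prod_zero fA y
    \<and> (\<exists>m z. f2_mult (ba_pow q l) y = (False, m) # z \<and> 0 < m)"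
proof -
  have "1 \<le> l" using \<open>0 < l\<close> by simp
  then show ?thesis
  proof (induction l rule: int_ge_induct)
    case base
    show ?case
      using assms(2,3) q fA_zero ba_pow_pos[of 1 q]
      by (cases y rule: remdups_adj.cases) (auto simp: reduced_Cons sgn_if add_eq_0_iff split: if_splits)
  next
    case (step i)
    then show ?case
      using q ba_pow_pos[of "i + 1" q] by auto
  qed
qed

lemma f2_mult_ba_pow_neg:
  assumes "l < 0" "reduced y" "lead_a_exp y = 0 \<Longrightarrow> first_b_sign y \<le> 0"
  shows "free_prod_zero fA (f2_mult (ba_pow q l) y) = free_prod_zero fA y
    \<and> (\<exists>m z. f2_mult (ba_pow q l) y = (True, - q) # (False, m) # z \<and> m < 0)"
proof -
  have "l \<le> - 1" using \<open>l < 0\<close> by simp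
  then show ?thesis
  proof (induction l rule: int_le_induct)
    case base
    show ?case
      using assms(2,3) q ba_pow_neg[of "- 1" q]
      by (cases y rule: remdups_adj.cases) (auto simp: reduced_Cons sgn_if split: if_splits)
  next
    case (step i)
    then show ?case
      using q ba_pow_neg[of "i - 1" q] by auto
  qed
qed

text \<open>The sign of the first \<open>b\<close>-syllable decides whether the image of a word begins with
  an extra syllable \<open>a\<^sup>-\<^sup>q\<close>, which may merge with a preceding \<open>a\<close>-syllable;
  the invariant records it.\<close>

lemma free_prod_zero_extend_transvection:
  assumes "reduced x"
  shows "free_prod_zero fA (extend_syllables (transvection_syllable q) x) = free_prod_zero fA x
    \<and> first_b_sign (extend_syllables (transvection_syllable q) x) = first_b_sign x
    \<and> lead_a_exp (extend_syllables (transvection_syllable q) x)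
        = lead_a_exp x - (if first_b_sign x < 0 then q else 0)"
  using assms
proof (induction x)
  case (Cons s x)
  interpret syllable_hom "transvection_syllable q"
    using q by (rule syllable_hom_transvection)
  obtain g e where s: "s = (g, e)" by fastforce
  define y where "y = extend_syllables (transvection_syllable q) x"
  have ry: "reduced y" by (simp add: y_def reduced_extend)
  have rx: "reduced x" and e: "e \<noteq> 0" and hd: "x = [] \<or> fst (hd x) \<noteq> g"
    using Cons.prems s by (auto simp: reduced_Cons)
  have IH: "free_prod_zero fA y = free_prod_zero fA x" "first_b_sign y = first_b_sign x"
    "lead_a_exp y = lead_a_exp x - (if first_b_sign x < 0 then q else 0)"
    using Cons.IH[OF rx] by (simp_all add: y_def)
  show ?case
  proof (cases g)
    case True
    have "lead_a_exp x = 0" using hd True by (cases x) auto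
    moreover have "extend_syllables (transvection_syllable q) (s # x) = scons (True, e) y"
      using s True e by (simp add: y_def)
    ultimately show ?thesis
      using IH s True fA_zero free_prod_zero_scons_a[of fA e y] first_b_sign_scons_a[of e y]
        lead_a_exp_scons_a[OF ry, of e]
      by (cases "first_b_sign x < 0") simp_all
  next
    case False
    have image: "extend_syllables (transvection_syllable q) (s # x) = f2_mult (ba_pow q e) y"
      using s False by (simp add: y_def)
    have empty: "lead_a_exp x = 0 \<longleftrightarrow> x = []"
      using lead_a_exp_eq_0_iff[OF rx] hd False by auto
    show ?thesis
    proof (cases "0 < e")
      case True
      have "lead_a_exp y = - q \<Longrightarrow> 0 \<le> first_b_sign y"
        using IH empty q by (cases "first_b_sign x < 0") auto
      then obtain m z where "f2_mult (ba_pow q e) y = (False, m) # z" "0 < m"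
        and "free_prod_zero fA (f2_mult (ba_pow q e) y) = free_prod_zero fA y"
        using f2_mult_ba_pow_pos[OF True ry] by blast
      then show ?thesis using image IH s False True by simp
    next
      case nonpos: False
      then have "e < 0" using e by simp
      moreover have "lead_a_exp y = 0 \<Longrightarrow> first_b_sign y \<le> 0"
        using IH empty q by (cases "first_b_sign x < 0") auto
      ultimately obtain m z where "f2_mult (ba_pow q e) y = (True, - q) # (False, m) # z" "m < 0"
        and "free_prod_zero fA (f2_mult (ba_pow q e) y) = free_prod_zero fA y"
        using f2_mult_ba_pow_neg[OF _ ry] by blast
      then show ?thesis using image IH s False \<open>e < 0\<close> by simp
    qed
  qed
qed simp

end

lemma free_prod_zero_transvection:
  assumes "fA 0 = 0" "\<And>k. fA (k + q) = fA k" "q \<noteq> 0" "x \<in> carrier F2"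
  shows "free_prod_zero fA (transvection q x) = free_prod_zero fA x"
  using free_prod_zero_extend_transvection[OF assms(1-3)] assms(4)
  by (simp add: transvection_def carrier_F2)

lemma transvection_in_Stab_Aut:
  assumes "fA 0 = 0" and period: "\<And>k. fA (k + q) = fA k" and q: "q \<noteq> 0"
  shows "transvection q \<in> Stab_Aut (free_prod_zero fA)"
proof -
  have period': "fA (k + - q) = fA k" for k
    using period[of "k - q"] by simp
  have "act (transvection q) (free_prod_zero fA) x = free_prod_zero fA x" if x: "x \<in> carrier F2" for x
  proof -
    have "act (transvection q) (free_prod_zero fA) x = free_prod_zero fA (transvection (- q) x)"
      using x q by (simp add: act_def inv_into_transvection)
    also have "\<dots> = free_prod_zero fA x"
      using free_prod_zero_transvection[OF assms(1) period'] q x by simp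
    finally show ?thesis .
  qed
  then show ?thesis
    using transvection_Aut[OF q] by (simp add: Stab_Aut_def)
qed

section \<open>Stabilizers in \<open>Out(F\<^sub>2)\<close>\<close>

lemma Stab_Aut_subset_Stab_Aut_homog: "Stab_Aut f \<subseteq> Stab_Aut (homog f)"
proof
  fix \<tau> assume \<tau>: "\<tau> \<in> Stab_Aut f"
  let ?\<sigma> = "inv_into (carrier F2) \<tau>"
  have \<sigma>: "?\<sigma> \<in> hom F2 F2"
    using \<tau> group.iso_set_sym[OF group_F2] by (auto simp: Stab_Aut_def Aut_def iso_def)
  have "act \<tau> (homog f) x = homog f x" if x: "x \<in> carrier F2" for x
  proof -
    have "f (?\<sigma> x [^]\<^bsub>F2\<^esub> k) = f (x [^]\<^bsub>F2\<^esub> k)" for k :: nat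
    proof -
      have "?\<sigma> x [^]\<^bsub>F2\<^esub> k = ?\<sigma> (x [^]\<^bsub>F2\<^esub> k)"
        using hom_nat_pow[OF \<sigma> x group_F2 group_F2] by simp
      moreover have "x [^]\<^bsub>F2\<^esub> k \<in> carrier F2"
        using x by (simp add: group.is_monoid[OF group_F2] monoid.nat_pow_closed)
      ultimately show ?thesis
        using \<tau> by (simp add: Stab_Aut_def act_def)
    qed
    then show ?thesis by (simp add: act_def homog_def)
  qed
  then show "\<tau> \<in> Stab_Aut (homog f)"
    using \<tau> by (simp add: Stab_Aut_def)
qed

lemma Stab_Aut_same_bclass: "\<tau> \<in> Stab_Aut f \<Longrightarrow> same_bclass (act \<tau> f) f"
  unfolding same_bclass_def
  by (intro exI[of _ "\<lambda>_. 0"])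
     (auto simp: Stab_Aut_def cobdry_def carrier_F2 mult_F2 reduced_f2_mult)

lemma out_class_Stab_Aut_subset_Stab_Out_bclass: "out_class ` Stab_Aut f \<subseteq> Stab_Out_bclass f"
  unfolding Stab_Out_bclass_def
  by (intro image_mono) (auto simp: Stab_Aut_same_bclass, simp add: Stab_Aut_def)

definition a_exp_sum :: "f2word \<Rightarrow> int" where
  "a_exp_sum w = (\<Sum>s\<leftarrow>w. if fst s then snd s else 0)"

lemma a_exp_sum_Nil [simp]: "a_exp_sum [] = 0"
  and a_exp_sum_Cons [simp]: "a_exp_sum (s # w) = (if fst s then snd s else 0) + a_exp_sum w"
  by (simp_all add: a_exp_sum_def)

lemma a_exp_sum_scons: "a_exp_sum (scons s w) = (if fst s then snd s else 0) + a_exp_sum w"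
  by (cases s; cases w) (auto simp: a_exp_sum_def)

lemma a_exp_sum_f2_mult: "a_exp_sum (f2_mult x y) = a_exp_sum x + a_exp_sum y"
  by (induction x) (simp_all add: a_exp_sum_scons)

lemma a_exp_sum_conj:
  assumes "g \<in> carrier F2" "x \<in> carrier F2"
  shows "a_exp_sum (g \<otimes>\<^bsub>F2\<^esub> x \<otimes>\<^bsub>F2\<^esub> inv\<^bsub>F2\<^esub> g) = a_exp_sum x"
proof -
  have "a_exp_sum (inv\<^bsub>F2\<^esub> g) + a_exp_sum g = a_exp_sum (inv\<^bsub>F2\<^esub> g \<otimes>\<^bsub>F2\<^esub> g)"
    by (simp add: mult_F2 a_exp_sum_f2_mult)
  also have "\<dots> = 0"
    using assms(1) group.l_inv[OF group_F2] by (simp add: one_F2)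
  finally show ?thesis by (simp add: mult_F2 a_exp_sum_f2_mult)
qed

lemma out_class_self:
  assumes "\<sigma> \<in> Aut"
  shows "\<sigma> \<in> out_class \<sigma>"
proof -
  have "inv\<^bsub>F2\<^esub> [] = []"
    using monoid.inv_one[OF group.is_monoid[OF group_F2]] by (simp add: one_F2)
  moreover have "reduced (\<sigma> x)" if "reduced x" for x
    using assms that by (auto simp: Aut_def iso_def hom_def carrier_F2)
  ultimately show ?thesis
    using assms unfolding out_class_def carrier_F2 mult_F2
    by (auto intro!: exI[of _ "[]"] simp: f2_mult_Nil_right)
qed

lemma inj_on_out_class_transvection: "inj_on (\<lambda>q. out_class (transvection q)) {q. q \<noteq> 0}"
proof (rule inj_onI)
  fix q q' assume q: "q \<in> {q. q \<noteq> 0}" and q': "q' \<in> {q. q \<noteq> 0}"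
    and eq: "out_class (transvection q) = out_class (transvection q')"
  have "transvection q' \<in> out_class (transvection q)"
    using out_class_self[OF transvection_Aut] q' eq by simp
  then obtain g where g: "g \<in> carrier F2"
    and conj: "transvection q' [(False, 1)] = g \<otimes>\<^bsub>F2\<^esub> transvection q [(False, 1)] \<otimes>\<^bsub>F2\<^esub> inv\<^bsub>F2\<^esub> g"
    by (force simp: out_class_def carrier_F2 reduced_Cons)
  have b_image: "transvection r [(False, 1)] = [(False, 1), (True, r)]" if "r \<noteq> 0" for r
    using that ba_pow_pos[of 1 r] by (simp add: transvection_def carrier_F2 reduced_Cons)
  have "q' = a_exp_sum (transvection q' [(False, 1)])"
    using q' b_image by simp
  also have "\<dots> = a_exp_sum (transvection q [(False, 1)])"
    using conj a_exp_sum_conj[OF g] transvection_closed q by (simp add: carrier_F2 reduced_Cons)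
  also have "\<dots> = q"
    using q b_image by simp
  finally show "q = q'" by simp
qed

lemma periodic_multiple:
  fixes g :: "int \<Rightarrow> 'a"
  assumes "\<And>k. g (k + n) = g k"
  shows "g (k + m * n) = g k"
proof (induction m arbitrary: k rule: int_induct[where k = 0])
  case (step1 i)
  then show ?case using assms[of "k + i * n"] by (simp add: algebra_simps)
next
  case (step2 i)
  then show ?case using assms[of "k + (i - 1) * n"] by (simp add: algebra_simps)
qed simp

lemma infinite_out_class_Stab_Aut:
  assumes fA_zero: "fA 0 = 0" and n: "n \<noteq> 0" and period: "\<And>k. fA (k + n) = fA k"
  shows "infinite (out_class ` Stab_Aut (free_prod_zero fA))"
proof -
  define Q where "Q = (\<lambda>m. m * n) ` {m. m \<noteq> 0}"
  have Q_nonzero: "Q \<subseteq> {q. q \<noteq> 0}"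
    using n by (auto simp: Q_def)
  have "transvection q \<in> Stab_Aut (free_prod_zero fA)" if "q \<in> Q" for q
  proof -
    obtain m where "q = m * n" using \<open>q \<in> Q\<close> by (auto simp: Q_def)
    then show ?thesis
      using transvection_in_Stab_Aut[OF fA_zero periodic_multiple[of fA, OF period]] Q_nonzero that
      by blast
  qed
  then have "out_class ` transvection ` Q \<subseteq> out_class ` Stab_Aut (free_prod_zero fA)"
    by blast
  moreover have "infinite Q"
    using n infinite_UNIV_int finite_imageD[of "\<lambda>m. m * n" "{m. m \<noteq> 0}"]
    by (auto simp: Q_def inj_on_def)
  then have "infinite (out_class ` transvection ` Q)"
    using inj_on_subset[OF inj_on_out_class_transvection Q_nonzero]
    by (simp add: finite_image_iff image_image)
  ultimately show ?thesis
    by (meson finite_subset)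
qed

theorem corollary3p21:
  fixes fA :: "int \<Rightarrow> real"
  assumes "bounded_fun fA" and "alternating fA" and "periodic fA"
  shows "infinite (Stab_Aut (free_prod_zero fA))
    \<and> infinite (Stab_Out_fun (homog (free_prod_zero fA)))
    \<and> infinite (Stab_Out_bclass (free_prod_zero fA))"
proof -
  have "fA 0 = 0"
    using assms(2)[unfolded alternating_def, rule_format, of 0] by simp
  moreover obtain n where "n \<noteq> 0" and "\<And>k. fA (k + n) = fA k"
    using assms(3) unfolding periodic_def by blast
  ultimately have stab: "infinite (out_class ` Stab_Aut (free_prod_zero fA))"
    by (rule infinite_out_class_Stab_Aut)
  have "out_class ` Stab_Aut (free_prod_zero fA) \<subseteq> Stab_Out_fun (homog (free_prod_zero fA))"
    unfolding Stab_Out_fun_def using Stab_Aut_subset_Stab_Aut_homog by (rule image_mono)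
  then show ?thesis
    using stab out_class_Stab_Aut_subset_Stab_Out_bclass
    by (meson finite_imageI finite_subset)
qed

end
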